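(* Let $G$ be a group and $\mathcal{L}$ a first-order language. Let $\mathfrak{C}$ be one of the following four categories: $\mathfrak{M}_G$ (G-structures with $G$-equivariant morphisms), $\mathfrak{M}_G^{\leq}$ (G-structures with $G$-equivariant embeddings), $\mathfrak{M}_G^{\prec}$ (G-structures with $G$-equivariant elementary embeddings), $\mathfrak{M}_G^{\geq}$ (G-structures with $G$-equivariant submersions). Then $\mathfrak{C}$ is closed under colimits of directed systems: for every directed system $\{\mathcal{M}_i, \rho_{ki}\}_{i,k\in\mathcal{D}}$ of G-structures whose transition maps $\rho_{ki}$ are arrows of $\mathfrak{C}$, the colimit structure $\mathcal{M}=\operatorname{coLim}_{i\in\mathcal{D}}\mathcal{M}_i$ carries a well-defined action of $G$ given by $g[x]=[gx]$ (for $x\in M_i$), with which $\mathcal{M}$ is a G-structure and each canonical quotient map $q_i:\mathcal{M}_i\to\mathcal{M}$, $x\mapsto[x]$, is a $G$-equivariant morphism.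
   Context: A language is $\mathcal{L}=(\mathcal{F},\mathcal{R},\mathcal{C})$ with function, relation and constant symbols, each function/relation symbol having a positive arity. An $\mathcal{L}$-structure $\mathcal{M}$ has a nonempty universe $M$ and interpretations $f^{\mathcal{M}}:M^{n_f}\to M$, $R^{\mathcal{M}}\subset M^{n_R}$, $c^{\mathcal{M}}\in M$. A morphism $\alpha:\mathcal{M}\to\mathcal{N}$ is a map $M\to N$ with $\alpha(f^{\mathcal{M}}(\mathbf a))=f^{\mathcal{N}}(\alpha(\mathbf a))$, $\alpha(R^{\mathcal{M}})\subset R^{\mathcal{N}}$, $\alpha(c^{\mathcal{M}})=c^{\mathcal{N}}$. It is saturated if $\alpha^{-1}(R^{\mathcal{N}})\subset R^{\mathcal{M}}$ for all $R$; an embedding (resp. submersion) is an injective (resp. surjective) saturated morphism; an elementary embedding is an embedding with $\mathcal{M}\models\varphi(\mathbf a)\iff\mathcal{N}\models\varphi(\alpha(\mathbf a))$ for all formulas $\varphi$ and tuples $\mathbf a$. Given a group $G$, a G-structure is an $\mathcal{L}$-structure $\mathcal{M}$ together with an action of $G$ on $M$ such that: the set $\{c^{\mathcal{M}}:c\in\mathcal{C}\}$ is $G$-invariant; for each $R\in\mathcal{R}$, if $(x_1,\dots,x_{n})\in R^{\mathcal{M}}$ and $g_1,\dots,g_n\in G$ then $(g_1x_1,\dots,g_nx_n)\in R^{\mathcal{M}}$; and for each $f\in\mathcal{F}$ of arity $n$, $f^{\mathcal{M}}(gx_1,\dots,gx_n)=g f^{\mathcal{M}}(x_1,\dots,x_n)$.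 Directed system and colimit: $(\mathcal{D},\leq)$ is a poset such that any $i,j$ have some $k\leq i,j$; for $k\leq i$ there are morphisms $\rho_{ki}:\mathcal{M}_i\to\mathcal{M}_k$ with $\rho_{ii}=\mathrm{id}$ and $\rho_{lk}\rho_{ki}=\rho_{li}$. The colimit $\mathcal{M}$ has universe $\bigsqcup_i M_i/\sim$, where for $x\in M_i,y\in M_j$, $x\sim y$ iff there is $k\leq i,j$ with $\rho_{ki}(x)=\rho_{kj}(y)$; $[x]$ denotes the class (germ) of $x$, and germs of tuples are defined likewise. Interpretations: $f^{\mathcal{M}}([\mathbf x])=[f^{\mathcal{M}_i}(\mathbf x)]$ for $\mathbf x\in M_i^{n_f}$; $R^{\mathcal{M}}=\{[\mathbf x]:\mathbf x\in R^{\mathcal{M}_i}\text{ for some } i\}$; $c^{\mathcal{M}}=[c^{\mathcal{M}_i}]$ for any $i$. *)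

theory Defs
  imports "HOL-Algebra.Group_Action"
begin

record ('f, 'r, 'c) language =
  fun_syms   :: "'f set"
  rel_syms   :: "'r set"
  const_syms :: "'c set"
  fun_ar     :: "'f \<Rightarrow> nat"
  rel_ar     :: "'r \<Rightarrow> nat"

definition is_language :: "('f, 'r, 'c) language \<Rightarrow> bool" where
  "is_language L \<longleftrightarrow>
     (\<forall>f \<in> fun_syms L. fun_ar L f > 0) \<and> (\<forall>R \<in> rel_syms L. rel_ar L R > 0)"

definition tuples :: "'a set \<Rightarrow> nat \<Rightarrow> 'a list set" where
  "tuples A n = {xs. set xs \<subseteq> A \<and> length xs = n}"

record ('f, 'r, 'c, 'a) struct =
  univ      :: "'a set"
  fun_int   :: "'f \<Rightarrow> 'a list \<Rightarrow> 'a"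
  rel_int   :: "'r \<Rightarrow> 'a list set"
  const_int :: "'c \<Rightarrow> 'a"

definition is_structure :: "('f, 'r, 'c) language \<Rightarrow> ('f, 'r, 'c, 'a) struct \<Rightarrow> bool" where
  "is_structure L M \<longleftrightarrow>
     univ M \<noteq> {} \<and>
     (\<forall>f \<in> fun_syms L. \<forall>xs \<in> tuples (univ M) (fun_ar L f). fun_int M f xs \<in> univ M) \<and>
     (\<forall>R \<in> rel_syms L. rel_int M R \<subseteq> tuples (univ M) (rel_ar L R)) \<and>
     (\<forall>c \<in> const_syms L. const_int M c \<in> univ M)"

definition morphism ::
  "('f, 'r, 'c) language \<Rightarrow> ('f, 'r, 'c, 'a) struct \<Rightarrow> ('f, 'r, 'c, 'b) struct
   \<Rightarrow> ('a \<Rightarrow> 'b) \<Rightarrow> bool" where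
  "morphism L M N \<alpha> \<longleftrightarrow>
     (\<forall>x \<in> univ M. \<alpha> x \<in> univ N) \<and>
     (\<forall>f \<in> fun_syms L. \<forall>xs \<in> tuples (univ M) (fun_ar L f).
        \<alpha> (fun_int M f xs) = fun_int N f (map \<alpha> xs)) \<and>
     (\<forall>R \<in> rel_syms L. \<forall>xs \<in> rel_int M R. map \<alpha> xs \<in> rel_int N R) \<and>
     (\<forall>c \<in> const_syms L. \<alpha> (const_int M c) = const_int N c)"

definition saturated ::
  "('f, 'r, 'c) language \<Rightarrow> ('f, 'r, 'c, 'a) struct \<Rightarrow> ('f, 'r, 'c, 'b) struct
   \<Rightarrow> ('a \<Rightarrow> 'b) \<Rightarrow> bool" where
  "saturated L M N \<alpha> \<longleftrightarrow> morphism L M N \<alpha> \<and>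
     (\<forall>R \<in> rel_syms L. \<forall>xs \<in> tuples (univ M) (rel_ar L R).
        map \<alpha> xs \<in> rel_int N R \<longrightarrow> xs \<in> rel_int M R)"

definition embedding where
  "embedding L M N \<alpha> \<longleftrightarrow> saturated L M N \<alpha> \<and> inj_on \<alpha> (univ M)"

definition submersion where
  "submersion L M N \<alpha> \<longleftrightarrow> saturated L M N \<alpha> \<and> \<alpha> ` univ M = univ N"

datatype ('f, 'c) trm = Var nat | Fn 'f "('f, 'c) trm list" | Cst 'c

datatype ('f, 'r, 'c) fml =
    Eq "('f, 'c) trm" "('f, 'c) trm"
  | Rel 'r "('f, 'c) trm list"
  | Neg "('f, 'r, 'c) fml"
  | Conj "('f, 'r, 'c) fml" "('f, 'r, 'c) fml"
  | Ex nat "('f, 'r, 'c) fml"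

fun wf_trm :: "('f, 'r, 'c) language \<Rightarrow> ('f, 'c) trm \<Rightarrow> bool" where
  "wf_trm L (Var n) = True"
| "wf_trm L (Fn f ts) = (f \<in> fun_syms L \<and> length ts = fun_ar L f \<and> (\<forall>t \<in> set ts. wf_trm L t))"
| "wf_trm L (Cst c) = (c \<in> const_syms L)"

fun wf_fml :: "('f, 'r, 'c) language \<Rightarrow> ('f, 'r, 'c) fml \<Rightarrow> bool" where
  "wf_fml L (Eq s t) = (wf_trm L s \<and> wf_trm L t)"
| "wf_fml L (Rel R ts) = (R \<in> rel_syms L \<and> length ts = rel_ar L R \<and> (\<forall>t \<in> set ts. wf_trm L t))"
| "wf_fml L (Neg \<phi>) = wf_fml L \<phi>"
| "wf_fml L (Conj \<phi> \<psi>) = (wf_fml L \<phi> \<and> wf_fml L \<psi>)"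
| "wf_fml L (Ex n \<phi>) = wf_fml L \<phi>"

fun eval_trm :: "('f, 'r, 'c, 'a) struct \<Rightarrow> (nat \<Rightarrow> 'a) \<Rightarrow> ('f, 'c) trm \<Rightarrow> 'a" where
  "eval_trm M v (Var n) = v n"
| "eval_trm M v (Fn f ts) = fun_int M f (map (eval_trm M v) ts)"
| "eval_trm M v (Cst c) = const_int M c"

fun sat :: "('f, 'r, 'c, 'a) struct \<Rightarrow> ('f, 'r, 'c) fml \<Rightarrow> (nat \<Rightarrow> 'a) \<Rightarrow> bool" where
  "sat M (Eq s t) v = (eval_trm M v s = eval_trm M v t)"
| "sat M (Rel R ts) v = (map (eval_trm M v) ts \<in> rel_int M R)"
| "sat M (Neg \<phi>) v = (\<not> sat M \<phi> v)"
| "sat M (Conj \<phi> \<psi>) v = (sat M \<phi> v \<and> sat M \<psi> v)"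
| "sat M (Ex n \<phi>) v = (\<exists>a \<in> univ M. sat M \<phi> (v(n := a)))"

text \<open>Elementary embedding: an embedding preserving and reflecting all
  \<open>\<L>\<close>-formulas under all assignments of the free variables
  (equivalently: all formulas \<open>\<phi>(a)\<close> with parameters \<open>a\<close> from \<open>M\<close>).\<close>
definition elementary_embedding where
  "elementary_embedding L M N \<alpha> \<longleftrightarrow> embedding L M N \<alpha> \<and>
     (\<forall>\<phi> v. wf_fml L \<phi> \<longrightarrow> range v \<subseteq> univ M \<longrightarrow> (sat M \<phi> v \<longleftrightarrow> sat N \<phi> (\<alpha> \<circ> v)))"

definition G_structure ::
  "('g, 'm) monoid_scheme \<Rightarrow> ('f, 'r, 'c) language \<Rightarrow> ('f, 'r, 'c, 'a) struct
   \<Rightarrow> ('g \<Rightarrow> 'a \<Rightarrow> 'a) \<Rightarrow> bool" where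
  "G_structure G L M act \<longleftrightarrow>
     is_structure L M \<and> group_action G (univ M) act \<and>
     (\<forall>g \<in> carrier G. act g ` (const_int M ` const_syms L) \<subseteq> const_int M ` const_syms L) \<and>
     (\<forall>R \<in> rel_syms L. \<forall>xs \<in> rel_int M R. \<forall>gs. length gs = length xs \<and> set gs \<subseteq> carrier G
        \<longrightarrow> map (\<lambda>(g, x). act g x) (zip gs xs) \<in> rel_int M R) \<and>
     (\<forall>f \<in> fun_syms L. \<forall>g \<in> carrier G. \<forall>xs \<in> tuples (univ M) (fun_ar L f).
        fun_int M f (map (act g) xs) = act g (fun_int M f xs))"

definition equivariant ::
  "('g, 'm) monoid_scheme \<Rightarrow> ('a set) \<Rightarrow> ('g \<Rightarrow> 'a \<Rightarrow> 'a) \<Rightarrow> ('g \<Rightarrow> 'b \<Rightarrow> 'b)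
   \<Rightarrow> ('a \<Rightarrow> 'b) \<Rightarrow> bool" where
  "equivariant G A actM actN \<alpha> \<longleftrightarrow> (\<forall>g \<in> carrier G. \<forall>x \<in> A. \<alpha> (actM g x) = actN g (\<alpha> x))"

text \<open>The four categories \<open>\<MM>_G, \<MM>_G^\<le>, \<MM>_G^\<prec>, \<MM>_G^\<ge>\<close>: objects are
  G-structures, arrows are G-equivariant morphisms / embeddings /
  elementary embeddings / submersions.\<close>
datatype category = Cat_Mor | Cat_Emb | Cat_Elem | Cat_Sub

definition arrow ::
  "category \<Rightarrow> ('g, 'm) monoid_scheme \<Rightarrow> ('f, 'r, 'c) language
   \<Rightarrow> ('f, 'r, 'c, 'a) struct \<Rightarrow> ('g \<Rightarrow> 'a \<Rightarrow> 'a)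
   \<Rightarrow> ('f, 'r, 'c, 'b) struct \<Rightarrow> ('g \<Rightarrow> 'b \<Rightarrow> 'b) \<Rightarrow> ('a \<Rightarrow> 'b) \<Rightarrow> bool" where
  "arrow C G L M actM N actN \<alpha> \<longleftrightarrow>
     equivariant G (univ M) actM actN \<alpha> \<and>
     (case C of
        Cat_Mor \<Rightarrow> morphism L M N \<alpha>
      | Cat_Emb \<Rightarrow> embedding L M N \<alpha>
      | Cat_Elem \<Rightarrow> elementary_embedding L M N \<alpha>
      | Cat_Sub \<Rightarrow> submersion L M N \<alpha>)"

text \<open>Index poset \<open>(D, leq)\<close>, nonempty, downward directed; \<open>\<rho> k i : M i \<rightarrow> M k\<close> for \<open>leq k i\<close>.\<close>
definition directed_system ::
  "('f, 'r, 'c) language \<Rightarrow> 'i set \<Rightarrow> ('i \<Rightarrow> 'i \<Rightarrow> bool)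
   \<Rightarrow> ('i \<Rightarrow> ('f, 'r, 'c, 'a) struct) \<Rightarrow> ('i \<Rightarrow> 'i \<Rightarrow> 'a \<Rightarrow> 'a) \<Rightarrow> bool" where
  "directed_system L D leq M \<rho> \<longleftrightarrow>
     D \<noteq> {} \<and>
     (\<forall>i \<in> D. leq i i) \<and>
     (\<forall>i \<in> D. \<forall>j \<in> D. leq i j \<and> leq j i \<longrightarrow> i = j) \<and>
     (\<forall>i \<in> D. \<forall>j \<in> D. \<forall>k \<in> D. leq i j \<and> leq j k \<longrightarrow> leq i k) \<and>
     (\<forall>i \<in> D. \<forall>j \<in> D. \<exists>k \<in> D. leq k i \<and> leq k j) \<and>
     (\<forall>i \<in> D. is_structure L (M i)) \<and>
     (\<forall>i \<in> D. \<forall>k \<in> D. leq k i \<longrightarrow> morphism L (M i) (M k) (\<rho> k i)) \<and>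
     (\<forall>i \<in> D. \<forall>x \<in> univ (M i). \<rho> i i x = x) \<and>
     (\<forall>i \<in> D. \<forall>k \<in> D. \<forall>l \<in> D. leq l k \<and> leq k i \<longrightarrow>
        (\<forall>x \<in> univ (M i). \<rho> l k (\<rho> k i x) = \<rho> l i x))"

definition germ_rel :: "'i set \<Rightarrow> ('i \<Rightarrow> 'i \<Rightarrow> bool) \<Rightarrow> ('i \<Rightarrow> 'i \<Rightarrow> 'a \<Rightarrow> 'a)
   \<Rightarrow> 'i \<times> 'a \<Rightarrow> 'i \<times> 'a \<Rightarrow> bool" where
  "germ_rel D leq \<rho> p q \<longleftrightarrow>
     (\<exists>k \<in> D. leq k (fst p) \<and> leq k (fst q) \<and> \<rho> k (fst p) (snd p) = \<rho> k (fst q) (snd q))"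

definition disj_union :: "'i set \<Rightarrow> ('i \<Rightarrow> ('f, 'r, 'c, 'a) struct) \<Rightarrow> ('i \<times> 'a) set" where
  "disj_union D M = Sigma D (\<lambda>i. univ (M i))"

definition germ :: "'i set \<Rightarrow> ('i \<Rightarrow> 'i \<Rightarrow> bool) \<Rightarrow> ('i \<Rightarrow> ('f, 'r, 'c, 'a) struct)
   \<Rightarrow> ('i \<Rightarrow> 'i \<Rightarrow> 'a \<Rightarrow> 'a) \<Rightarrow> 'i \<Rightarrow> 'a \<Rightarrow> ('i \<times> 'a) set" where
  "germ D leq M \<rho> i x = {q \<in> disj_union D M. germ_rel D leq \<rho> (i, x) q}"

text \<open>The colimit structure, following the paper's definition (interpretations
  are computed from any chosen representative).\<close>
definition colim :: "'i set \<Rightarrow> ('i \<Rightarrow> 'i \<Rightarrow> bool) \<Rightarrow> ('i \<Rightarrow> ('f, 'r, 'c, 'a) struct)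
   \<Rightarrow> ('i \<Rightarrow> 'i \<Rightarrow> 'a \<Rightarrow> 'a) \<Rightarrow> ('f, 'r, 'c, ('i \<times> 'a) set) struct" where
  "colim D leq M \<rho> =
     \<lparr> univ = (\<lambda>(i, x). germ D leq M \<rho> i x) ` disj_union D M,
       fun_int = (\<lambda>f Xs. let (i, xs) = (SOME (i, xs). i \<in> D \<and> set xs \<subseteq> univ (M i)
                                            \<and> map (germ D leq M \<rho> i) xs = Xs)
                         in germ D leq M \<rho> i (fun_int (M i) f xs)),
       rel_int = (\<lambda>R. {Xs. \<exists>i \<in> D. \<exists>xs \<in> rel_int (M i) R. Xs = map (germ D leq M \<rho> i) xs}),
       const_int = (\<lambda>c. let i = (SOME i. i \<in> D) in germ D leq M \<rho> i (const_int (M i) c)) \<rparr>"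

text \<open>The induced action on the colimit: \<open>g[x] = [g x]\<close> computed from a chosen
  representative (and \<open>undefined\<close> off the universe, as required for
  elements of \<open>BijGroup\<close>).\<close>
definition colim_act :: "'i set \<Rightarrow> ('i \<Rightarrow> 'i \<Rightarrow> bool) \<Rightarrow> ('i \<Rightarrow> ('f, 'r, 'c, 'a) struct)
   \<Rightarrow> ('i \<Rightarrow> 'i \<Rightarrow> 'a \<Rightarrow> 'a) \<Rightarrow> ('i \<Rightarrow> 'g \<Rightarrow> 'a \<Rightarrow> 'a) \<Rightarrow> 'g \<Rightarrow> ('i \<times> 'a) set \<Rightarrow> ('i \<times> 'a) set" where
  "colim_act D leq M \<rho> act g X =
     (if X \<in> univ (colim D leq M \<rho>) then
        (let (i, x) = (SOME (i, x). (i, x) \<in> disj_union D M \<and> germ D leq M \<rho> i x = X)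
         in germ D leq M \<rho> i (act i g x))
      else undefined)"

end

theory Submission
  imports Defs
begin

text \<open>Two elements of a directed system have the same germ iff they become equal at some common
  later stage; directedness makes this an equivalence, and any finitely many germs have
  representatives at one common stage. Since the transition maps preserve the interpretations
  and commute with the actions, the interpretations of the colimit and the action
  \<open>g[x] = [g x]\<close> do not depend on the chosen representatives. Every axiom of a G-structure
  involves finitely many elements only, so it can be checked at a common stage \<open>M\<^sub>i\<close>, where it
  holds by assumption.\<close>

lemma group_actionI:
  assumes "group G"
    and extensional: "\<And>g. g \<in> carrier G \<Longrightarrow> \<phi> g \<in> extensional E"
    and closed: "\<And>g x. g \<in> carrier G \<Longrightarrow> x \<in> E \<Longrightarrow> \<phi> g x \<in> E"
    and one: "\<And>x. x \<in> E \<Longrightarrow> \<phi> \<one>\<^bsub>G\<^esub> x = x"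
    and mult: "\<And>g h x. g \<in> carrier G \<Longrightarrow> h \<in> carrier G \<Longrightarrow> x \<in> E \<Longrightarrow>
      \<phi> (g \<otimes>\<^bsub>G\<^esub> h) x = \<phi> g (\<phi> h x)"
  shows "group_action G E \<phi>"
proof -
  interpret G: group G by fact
  have Bij: "\<phi> g \<in> Bij E" if g: "g \<in> carrier G" for g
  proof -
    have "bij_betw (\<phi> g) E E"
    proof (rule bij_betw_byWitness[where f' = "\<phi> (inv\<^bsub>G\<^esub> g)"])
      show "\<forall>x \<in> E. \<phi> (inv\<^bsub>G\<^esub> g) (\<phi> g x) = x" "\<forall>x \<in> E. \<phi> g (\<phi> (inv\<^bsub>G\<^esub> g) x) = x"
        using g by (simp_all flip: mult add: one)
    qed (use g closed in auto)
    then show ?thesis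
      using extensional[OF g] by (simp add: Bij_def)
  qed
  have "\<phi> (g \<otimes>\<^bsub>G\<^esub> h) = compose E (\<phi> g) (\<phi> h)" if "g \<in> carrier G" "h \<in> carrier G" for g h
    using that extensional[of "g \<otimes>\<^bsub>G\<^esub> h"] mult
    by (intro ext) (auto simp: compose_def extensional_def)
  with Bij have "\<phi> \<in> hom G (BijGroup E)"
    by (auto intro!: homI simp: BijGroup_def)
  then show ?thesis
    unfolding group_action_def group_hom_def group_hom_axioms_def
    by (blast intro: group_BijGroup)
qed

locale directed_colimit =
  fixes L :: "('f, 'r, 'c) language" and D :: "'i set" and leq :: "'i \<Rightarrow> 'i \<Rightarrow> bool"
    and M :: "'i \<Rightarrow> ('f, 'r, 'c, 'a) struct" and \<rho> :: "'i \<Rightarrow> 'i \<Rightarrow> 'a \<Rightarrow> 'a"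
  assumes directed_system: "directed_system L D leq M \<rho>"
begin

abbreviation "q \<equiv> germ D leq M \<rho>"
abbreviation "Colim \<equiv> colim D leq M \<rho>"

lemma index_nonempty: "D \<noteq> {}"
  and index_refl: "i \<in> D \<Longrightarrow> leq i i"
  and index_trans: "\<lbrakk>i \<in> D; j \<in> D; k \<in> D; leq i j; leq j k\<rbrakk> \<Longrightarrow> leq i k"
  and index_directed: "\<lbrakk>i \<in> D; j \<in> D\<rbrakk> \<Longrightarrow> \<exists>k \<in> D. leq k i \<and> leq k j"
  and is_structure_stage: "i \<in> D \<Longrightarrow> is_structure L (M i)"
  and morphism_transition: "\<lbrakk>i \<in> D; k \<in> D; leq k i\<rbrakk> \<Longrightarrow> morphism L (M i) (M k) (\<rho> k i)"
  and transition_id: "\<lbrakk>i \<in> D; x \<in> univ (M i)\<rbrakk> \<Longrightarrow> \<rho> i i x = x"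
  and transition_comp: "\<lbrakk>i \<in> D; k \<in> D; l \<in> D; leq l k; leq k i; x \<in> univ (M i)\<rbrakk>
    \<Longrightarrow> \<rho> l k (\<rho> k i x) = \<rho> l i x"
  using directed_system unfolding directed_system_def by blast+

lemma transition_in_univ: "\<lbrakk>i \<in> D; k \<in> D; leq k i; x \<in> univ (M i)\<rbrakk> \<Longrightarrow> \<rho> k i x \<in> univ (M k)"
  using morphism_transition unfolding morphism_def by blast

lemma transition_eq_later:
  "\<lbrakk>i \<in> D; j \<in> D; k \<in> D; l \<in> D; leq k i; leq k j; leq l k; x \<in> univ (M i); y \<in> univ (M j);
    \<rho> k i x = \<rho> k j y\<rbrakk> \<Longrightarrow> \<rho> l i x = \<rho> l j y"
  by (metis transition_comp)

lemma germ_rel_iff: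
  "germ_rel D leq \<rho> (i, x) (j, y) \<longleftrightarrow> (\<exists>k \<in> D. leq k i \<and> leq k j \<and> \<rho> k i x = \<rho> k j y)"
  by (simp add: germ_rel_def)

lemma germ_rel_refl: "i \<in> D \<Longrightarrow> germ_rel D leq \<rho> (i, x) (i, x)"
  unfolding germ_rel_iff using index_refl by blast

lemma germ_rel_sym: "germ_rel D leq \<rho> p p' \<Longrightarrow> germ_rel D leq \<rho> p' p"
  unfolding germ_rel_def by metis

lemma germ_rel_trans:
  assumes "i \<in> D" "j \<in> D" "l \<in> D" "x \<in> univ (M i)" "y \<in> univ (M j)" "z \<in> univ (M l)"
    and "germ_rel D leq \<rho> (i, x) (j, y)" "germ_rel D leq \<rho> (j, y) (l, z)"
  shows "germ_rel D leq \<rho> (i, x) (l, z)"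
proof -
  obtain k where k: "k \<in> D" "leq k i" "leq k j" "\<rho> k i x = \<rho> k j y"
    using assms(7) germ_rel_iff by blast
  obtain k' where k': "k' \<in> D" "leq k' j" "leq k' l" "\<rho> k' j y = \<rho> k' l z"
    using assms(8) germ_rel_iff by blast
  obtain m where m: "m \<in> D" "leq m k" "leq m k'"
    using index_directed[OF k(1) k'(1)] by blast
  have "\<rho> m i x = \<rho> m j y" using transition_eq_later[of i j k m x y] k m assms by blast
  also have "\<dots> = \<rho> m l z" using transition_eq_later[of j l k' m y z] k' m assms by blast
  finally show ?thesis
    unfolding germ_rel_iff using m k k' assms index_trans by blast
qed

lemma germ_eq_iff:
  assumes "i \<in> D" "j \<in> D" "x \<in> univ (M i)" "y \<in> univ (M j)"
  shows "q i x = q j y \<longleftrightarrow> (\<exists>k \<in> D. leq k i \<and> leq k j \<and> \<rho> k i x = \<rho> k j y)"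
proof -
  have "q i x = q j y \<longleftrightarrow> germ_rel D leq \<rho> (i, x) (j, y)"
  proof
    assume "q i x = q j y"
    moreover have "(j, y) \<in> q j y"
      unfolding germ_def disj_union_def using assms germ_rel_refl by auto
    ultimately show "germ_rel D leq \<rho> (i, x) (j, y)" unfolding germ_def by auto
  next
    assume "germ_rel D leq \<rho> (i, x) (j, y)"
    then have "germ_rel D leq \<rho> (i, x) (l, z) \<longleftrightarrow> germ_rel D leq \<rho> (j, y) (l, z)"
      if "l \<in> D" "z \<in> univ (M l)" for l z
      using germ_rel_trans[of i j l x y z] germ_rel_trans[of j i l y x z] germ_rel_sym assms that
      by blast
    then show "q i x = q j y"
      unfolding germ_def disj_union_def by auto
  qed
  then show ?thesis by (simp add: germ_rel_iff)
qed

lemma germ_transition: "\<lbrakk>i \<in> D; k \<in> D; leq k i; x \<in> univ (M i)\<rbrakk> \<Longrightarrow> q k (\<rho> k i x) = q i x"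
proof -
  assume "i \<in> D" "k \<in> D" "leq k i" "x \<in> univ (M i)"
  moreover from this have "\<rho> k k (\<rho> k i x) = \<rho> k i x"
    by (simp add: transition_id transition_in_univ)
  ultimately show ?thesis
    using germ_eq_iff[of k i "\<rho> k i x" x] transition_in_univ index_refl by blast
qed

lemma map_germ_eq_imp_common_stage:
  assumes "i \<in> D" "j \<in> D"
  shows "\<lbrakk>length xs = length ys; set xs \<subseteq> univ (M i); set ys \<subseteq> univ (M j);
    map (q i) xs = map (q j) ys\<rbrakk> \<Longrightarrow> \<exists>k \<in> D. leq k i \<and> leq k j \<and> map (\<rho> k i) xs = map (\<rho> k j) ys"
proof (induction xs ys rule: list_induct2)
  case Nil
  then show ?case using index_directed[OF assms] by auto
next
  case (Cons x xs y ys)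
  obtain k where k: "k \<in> D" "leq k i" "leq k j" "map (\<rho> k i) xs = map (\<rho> k j) ys"
    using Cons by auto
  obtain k' where k': "k' \<in> D" "leq k' i" "leq k' j" "\<rho> k' i x = \<rho> k' j y"
    using Cons.prems germ_eq_iff[OF assms, of x y] by auto
  obtain m where m: "m \<in> D" "leq m k" "leq m k'"
    using index_directed[OF k(1) k'(1)] by blast
  have "\<rho> m i x = \<rho> m j y"
    using transition_eq_later[of i j k' m x y] k' m assms Cons.prems by simp
  moreover have "map (\<rho> m i) xs = map (\<rho> m j) ys"
  proof -
    have "map (\<rho> m i) xs = map (\<rho> m k) (map (\<rho> k i) xs)"
      using Cons.prems k(1,2) m assms by (auto simp: transition_comp)
    also have "\<dots> = map (\<rho> m k) (map (\<rho> k j) ys)" using k(4) by simp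
    also have "\<dots> = map (\<rho> m j) ys"
      using Cons.prems k(1,3) m assms by (auto simp: transition_comp)
    finally show ?thesis .
  qed
  moreover have "leq m i" "leq m j"
    using index_trans[of m k] m k assms by blast+
  ultimately show ?case using m by auto
qed

lemma germ_fun_int_cong:
  assumes "i \<in> D" "j \<in> D" "f \<in> fun_syms L"
    and xs: "xs \<in> tuples (univ (M i)) (fun_ar L f)" and ys: "ys \<in> tuples (univ (M j)) (fun_ar L f)"
    and "map (q i) xs = map (q j) ys"
  shows "q i (fun_int (M i) f xs) = q j (fun_int (M j) f ys)"
proof -
  obtain k where k: "k \<in> D" "leq k i" "leq k j" "map (\<rho> k i) xs = map (\<rho> k j) ys"
    using map_germ_eq_imp_common_stage[OF assms(1,2) _ _ _ assms(6)] xs ys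
    by (auto simp: tuples_def)
  have "fun_int (M i) f xs \<in> univ (M i)" "fun_int (M j) f ys \<in> univ (M j)"
    using is_structure_stage assms unfolding is_structure_def by blast+
  moreover have "\<rho> k i (fun_int (M i) f xs) = \<rho> k j (fun_int (M j) f ys)"
    using morphism_transition[OF assms(1) k(1,2)] morphism_transition[OF assms(2) k(1,3)]
      assms(3) xs ys k(4) unfolding morphism_def by metis
  ultimately show ?thesis using germ_eq_iff assms(1,2) k by blast
qed

lemma germ_const_int_cong:
  assumes "i \<in> D" "j \<in> D" "c \<in> const_syms L"
  shows "q i (const_int (M i) c) = q j (const_int (M j) c)"
proof -
  obtain k where k: "k \<in> D" "leq k i" "leq k j" using index_directed[OF assms(1,2)] by blast
  have "\<rho> k i (const_int (M i) c) = \<rho> k j (const_int (M j) c)"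
    using morphism_transition[OF assms(1) k(1,2)] morphism_transition[OF assms(2) k(1,3)] assms(3)
    unfolding morphism_def by metis
  moreover have "const_int (M i) c \<in> univ (M i)" "const_int (M j) c \<in> univ (M j)"
    using is_structure_stage assms unfolding is_structure_def by blast+
  ultimately show ?thesis using germ_eq_iff assms k by blast
qed

lemma univ_colim: "univ Colim = (\<lambda>(i, x). q i x) ` disj_union D M"
  by (simp add: colim_def)

lemma germ_in_univ_colim: "\<lbrakk>i \<in> D; x \<in> univ (M i)\<rbrakk> \<Longrightarrow> q i x \<in> univ Colim"
  unfolding univ_colim disj_union_def by force

lemma univ_colimE:
  assumes "X \<in> univ Colim"
  obtains i x where "i \<in> D" "x \<in> univ (M i)" "X = q i x"
  using assms unfolding univ_colim disj_union_def by force

lemma germs_common_stage: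
  "set Xs \<subseteq> univ Colim \<Longrightarrow> \<exists>i \<in> D. \<exists>xs. set xs \<subseteq> univ (M i) \<and> map (q i) xs = Xs"
proof (induction Xs)
  case Nil
  then show ?case using index_nonempty by auto
next
  case (Cons X Xs)
  then obtain i xs where i: "i \<in> D" "set xs \<subseteq> univ (M i)" "map (q i) xs = Xs" by auto
  obtain j y where j: "j \<in> D" "y \<in> univ (M j)" "X = q j y"
    using Cons.prems by (auto elim: univ_colimE)
  obtain k where k: "k \<in> D" "leq k i" "leq k j" using index_directed[OF i(1) j(1)] by blast
  have "set (\<rho> k j y # map (\<rho> k i) xs) \<subseteq> univ (M k)"
    using transition_in_univ i j k by auto
  moreover have "map (q k) (map (\<rho> k i) xs) = Xs"
    using germ_transition[OF i(1) k(1,2)] i by (auto simp: subset_eq)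
  moreover have "q k (\<rho> k j y) = X"
    using germ_transition[OF j(1) k(1,3) j(2)] j(3) by simp
  ultimately show ?case
    using k(1) by (intro bexI[of _ k] exI[of _ "\<rho> k j y # map (\<rho> k i) xs"]) auto
qed

lemma fun_int_colim:
  assumes "i \<in> D" "f \<in> fun_syms L" "xs \<in> tuples (univ (M i)) (fun_ar L f)"
  shows "fun_int Colim f (map (q i) xs) = q i (fun_int (M i) f xs)"
proof -
  let ?P = "\<lambda>(j, ys). j \<in> D \<and> set ys \<subseteq> univ (M j) \<and> map (q j) ys = map (q i) xs"
  obtain j ys where chosen: "(SOME p. ?P p) = (j, ys)" by fastforce
  have "?P (j, ys)"
    using someI_ex[of ?P] chosen assms(1,3) by (force simp: tuples_def)
  then have j: "j \<in> D" "ys \<in> tuples (univ (M j)) (fun_ar L f)" "map (q j) ys = map (q i) xs"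
    using assms(3) by (auto simp: tuples_def dest: map_eq_imp_length_eq)
  have "fun_int Colim f (map (q i) xs) = q j (fun_int (M j) f ys)"
    by (simp add: colim_def chosen)
  also have "\<dots> = q i (fun_int (M i) f xs)"
    using germ_fun_int_cong j assms by blast
  finally show ?thesis .
qed

lemma const_int_colim:
  assumes "i \<in> D" "c \<in> const_syms L"
  shows "const_int Colim c = q i (const_int (M i) c)"
proof -
  have "(SOME j. j \<in> D) \<in> D" using index_nonempty by (simp add: some_in_eq)
  from germ_const_int_cong[OF this assms] show ?thesis
    by (simp add: colim_def Let_def)
qed

lemma rel_int_colim: "rel_int Colim R = {Xs. \<exists>i \<in> D. \<exists>xs \<in> rel_int (M i) R. Xs = map (q i) xs}"
  by (simp add: colim_def)

lemma is_structure_colim: "is_structure L Colim"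
  unfolding is_structure_def
proof (intro conjI ballI)
  show "univ Colim \<noteq> {}"
    using index_nonempty is_structure_stage unfolding is_structure_def univ_colim disj_union_def
    by blast
next
  fix f Xs assume f: "f \<in> fun_syms L" and Xs: "Xs \<in> tuples (univ Colim) (fun_ar L f)"
  then obtain i xs where i: "i \<in> D" "set xs \<subseteq> univ (M i)" "map (q i) xs = Xs"
    using germs_common_stage unfolding tuples_def by blast
  then have xs: "xs \<in> tuples (univ (M i)) (fun_ar L f)" using Xs by (auto simp: tuples_def)
  then have "fun_int (M i) f xs \<in> univ (M i)"
    using is_structure_stage i(1) f unfolding is_structure_def by blast
  then show "fun_int Colim f Xs \<in> univ Colim"
    using fun_int_colim[OF i(1) f xs] i germ_in_univ_colim by simp
next
  fix R assume "R \<in> rel_syms L"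
  show "rel_int Colim R \<subseteq> tuples (univ Colim) (rel_ar L R)"
  proof
    fix Xs assume "Xs \<in> rel_int Colim R"
    then obtain i xs where i: "i \<in> D" "xs \<in> rel_int (M i) R" "Xs = map (q i) xs"
      unfolding rel_int_colim by blast
    then have "xs \<in> tuples (univ (M i)) (rel_ar L R)"
      using is_structure_stage \<open>R \<in> rel_syms L\<close> unfolding is_structure_def by blast
    then show "Xs \<in> tuples (univ Colim) (rel_ar L R)"
      using i germ_in_univ_colim by (auto simp: tuples_def)
  qed
next
  fix c assume "c \<in> const_syms L"
  moreover obtain i where "i \<in> D" using index_nonempty by blast
  ultimately show "const_int Colim c \<in> univ Colim"
    using const_int_colim germ_in_univ_colim is_structure_stage unfolding is_structure_def by metis
qed

lemma morphism_germ:
  assumes i: "i \<in> D"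
  shows "morphism L (M i) Colim (q i)"
  unfolding morphism_def
proof (intro conjI ballI)
  fix x assume "x \<in> univ (M i)"
  then show "q i x \<in> univ Colim" using germ_in_univ_colim[OF i] by blast
next
  fix f xs assume "f \<in> fun_syms L" "xs \<in> tuples (univ (M i)) (fun_ar L f)"
  then show "q i (fun_int (M i) f xs) = fun_int Colim f (map (q i) xs)"
    using fun_int_colim[OF i] by simp
next
  fix R xs assume "xs \<in> rel_int (M i) R"
  then show "map (q i) xs \<in> rel_int Colim R" unfolding rel_int_colim using i by blast
next
  fix c assume "c \<in> const_syms L"
  then show "q i (const_int (M i) c) = const_int Colim c" using const_int_colim[OF i] by simp
qed

end

locale equivariant_directed_colimit = directed_colimit L D leq M \<rho>
  for L :: "('f, 'r, 'c) language" and D :: "'i set" and leq :: "'i \<Rightarrow> 'i \<Rightarrow> bool"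
    and M :: "'i \<Rightarrow> ('f, 'r, 'c, 'a) struct" and \<rho> :: "'i \<Rightarrow> 'i \<Rightarrow> 'a \<Rightarrow> 'a" +
  fixes G :: "('g, 'm) monoid_scheme" and act :: "'i \<Rightarrow> 'g \<Rightarrow> 'a \<Rightarrow> 'a"
  assumes group: "group G"
    and G_structure_stage: "i \<in> D \<Longrightarrow> G_structure G L (M i) (act i)"
    and equivariant_transition:
      "\<lbrakk>i \<in> D; k \<in> D; leq k i\<rbrakk> \<Longrightarrow> equivariant G (univ (M i)) (act i) (act k) (\<rho> k i)"
begin

abbreviation "act_colim \<equiv> colim_act D leq M \<rho> act"

lemma group_action_stage: "i \<in> D \<Longrightarrow> group_action G (univ (M i)) (act i)"
  using G_structure_stage unfolding G_structure_def by blast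

lemma act_in_univ: "\<lbrakk>i \<in> D; g \<in> carrier G; x \<in> univ (M i)\<rbrakk> \<Longrightarrow> act i g x \<in> univ (M i)"
  using group_action.bij_prop0[OF group_action_stage] Bij_imp_funcset by blast

lemma act_one: "\<lbrakk>i \<in> D; x \<in> univ (M i)\<rbrakk> \<Longrightarrow> act i \<one>\<^bsub>G\<^esub> x = x"
  using group_action.id_eq_one[OF group_action_stage] by (metis restrict_apply')

lemma act_mult:
  "\<lbrakk>i \<in> D; g \<in> carrier G; h \<in> carrier G; x \<in> univ (M i)\<rbrakk> \<Longrightarrow> act i (g \<otimes>\<^bsub>G\<^esub> h) x = act i g (act i h x)"
  using group_action.composition_rule[OF group_action_stage] by blast

lemma transition_act:
  "\<lbrakk>i \<in> D; k \<in> D; leq k i; g \<in> carrier G; x \<in> univ (M i)\<rbrakk> \<Longrightarrow> \<rho> k i (act i g x) = act k g (\<rho> k i x)"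
  using equivariant_transition unfolding equivariant_def by blast

lemma act_colim_germ:
  assumes i: "i \<in> D" and g: "g \<in> carrier G" and x: "x \<in> univ (M i)"
  shows "act_colim g (q i x) = q i (act i g x)"
proof -
  let ?P = "\<lambda>(j, y). (j, y) \<in> disj_union D M \<and> q j y = q i x"
  obtain j y where chosen: "(SOME p. ?P p) = (j, y)" by fastforce
  have "?P (j, y)"
    using someI_ex[of ?P] chosen i x by (force simp: disj_union_def)
  then have j: "j \<in> D" "y \<in> univ (M j)" "q j y = q i x" by (simp_all add: disj_union_def)
  then obtain k where k: "k \<in> D" "leq k j" "leq k i" "\<rho> k j y = \<rho> k i x"
    using germ_eq_iff[OF j(1) i j(2) x] by blast
  have "act_colim g (q i x) = q j (act j g y)"
    unfolding colim_act_def using germ_in_univ_colim[OF i x] by (simp add: chosen)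
  also have "\<dots> = q i (act i g x)"
    using germ_eq_iff[OF j(1) i act_in_univ[OF j(1) g j(2)] act_in_univ[OF i g x]] k
      transition_act[OF j(1) k(1,2) g j(2)] transition_act[OF i k(1,3) g x] by auto
  finally show ?thesis .
qed

lemma group_action_colim: "group_action G (univ Colim) act_colim"
proof (rule group_actionI[OF group])
  fix g assume "g \<in> carrier G"
  show "act_colim g \<in> extensional (univ Colim)"
    by (simp add: colim_act_def extensional_def)
next
  fix g X assume "g \<in> carrier G" "X \<in> univ Colim"
  then show "act_colim g X \<in> univ Colim"
    by (auto elim!: univ_colimE simp: act_colim_germ act_in_univ germ_in_univ_colim)
next
  fix X assume "X \<in> univ Colim"
  then show "act_colim \<one>\<^bsub>G\<^esub> X = X"
    by (auto elim!: univ_colimE simp: act_colim_germ act_one group.is_monoid[OF group])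
next
  fix g h X assume g: "g \<in> carrier G" and h: "h \<in> carrier G" and "X \<in> univ Colim"
  then obtain i x where i: "i \<in> D" "x \<in> univ (M i)" "X = q i x" by (elim univ_colimE)
  have "g \<otimes>\<^bsub>G\<^esub> h \<in> carrier G" using g h group by (simp add: group.is_monoid monoid.m_closed)
  then show "act_colim (g \<otimes>\<^bsub>G\<^esub> h) X = act_colim g (act_colim h X)"
    using g h i by (simp add: act_colim_germ act_in_univ act_mult)
qed

lemma act_colim_const_int_closed:
  assumes g: "g \<in> carrier G"
  shows "act_colim g ` (const_int Colim ` const_syms L) \<subseteq> const_int Colim ` const_syms L"
proof
  obtain i where i: "i \<in> D" using index_nonempty by blast
  fix Y assume "Y \<in> act_colim g ` (const_int Colim ` const_syms L)"
  then obtain c where c: "c \<in> const_syms L" "Y = act_colim g (const_int Colim c)" by blast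
  obtain c' where c': "c' \<in> const_syms L" "act i g (const_int (M i) c) = const_int (M i) c'"
    using G_structure_stage[OF i] g c(1) unfolding G_structure_def by blast
  have "const_int (M i) c \<in> univ (M i)"
    using is_structure_stage[OF i] c(1) unfolding is_structure_def by blast
  then have "Y = const_int Colim c'"
    using c c' i g by (simp add: const_int_colim act_colim_germ)
  then show "Y \<in> const_int Colim ` const_syms L" using c'(1) by blast
qed

lemma act_colim_rel_int_closed:
  assumes R: "R \<in> rel_syms L" and Xs: "Xs \<in> rel_int Colim R"
    and gs: "length gs = length Xs" "set gs \<subseteq> carrier G"
  shows "map (\<lambda>(g, X). act_colim g X) (zip gs Xs) \<in> rel_int Colim R"
proof -
  obtain i xs where i: "i \<in> D" "xs \<in> rel_int (M i) R" "Xs = map (q i) xs"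
    using Xs unfolding rel_int_colim by blast
  have xs: "set xs \<subseteq> univ (M i)"
    using is_structure_stage[OF i(1)] R i(2) unfolding is_structure_def tuples_def by blast
  have "act_colim g (q i x) = q i (act i g x)" if "(g, x) \<in> set (zip gs xs)" for g x
    using set_zip_leftD[OF that] set_zip_rightD[OF that] gs(2) xs act_colim_germ[OF i(1)] by blast
  then have "map (\<lambda>(g, X). act_colim g X) (zip gs Xs) = map (q i) (map (\<lambda>(g, x). act i g x) (zip gs xs))"
    unfolding i(3) zip_map2 map_map by (auto simp: comp_def)
  moreover have "map (\<lambda>(g, x). act i g x) (zip gs xs) \<in> rel_int (M i) R"
    using G_structure_stage[OF i(1)] i R gs unfolding G_structure_def by auto
  ultimately show ?thesis
    unfolding rel_int_colim using i(1) by blast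
qed

lemma fun_int_colim_equivariant:
  assumes f: "f \<in> fun_syms L" and g: "g \<in> carrier G" and Xs: "Xs \<in> tuples (univ Colim) (fun_ar L f)"
  shows "fun_int Colim f (map (act_colim g) Xs) = act_colim g (fun_int Colim f Xs)"
proof -
  obtain i xs where i: "i \<in> D" "set xs \<subseteq> univ (M i)" "Xs = map (q i) xs"
    using Xs germs_common_stage[of Xs] unfolding tuples_def by force
  have xs: "xs \<in> tuples (univ (M i)) (fun_ar L f)" using i(2,3) Xs by (simp add: tuples_def)
  have gxs: "map (act i g) xs \<in> tuples (univ (M i)) (fun_ar L f)"
    using xs act_in_univ[OF i(1) g] by (auto simp: tuples_def)
  have "map (act_colim g) Xs = map (q i) (map (act i g) xs)"
    using i act_colim_germ[OF i(1) g] by auto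
  then have "fun_int Colim f (map (act_colim g) Xs) = q i (fun_int (M i) f (map (act i g) xs))"
    using fun_int_colim[OF i(1) f gxs] by simp
  also have "\<dots> = q i (act i g (fun_int (M i) f xs))"
    using G_structure_stage[OF i(1)] f g xs unfolding G_structure_def by metis
  also have "\<dots> = act_colim g (fun_int Colim f Xs)"
  proof -
    have "fun_int (M i) f xs \<in> univ (M i)"
      using is_structure_stage[OF i(1)] f xs unfolding is_structure_def by blast
    then show ?thesis
      using act_colim_germ[OF i(1) g] fun_int_colim[OF i(1) f xs] i(3) by simp
  qed
  finally show ?thesis .
qed

lemma G_structure_colim: "G_structure G L Colim act_colim"
  unfolding G_structure_def
proof (intro conjI ballI allI impI)
  show "is_structure L Colim" by (rule is_structure_colim)
  show "group_action G (univ Colim) act_colim" by (rule group_action_colim)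
qed (simp_all add: act_colim_const_int_closed act_colim_rel_int_closed fun_int_colim_equivariant)

end

theorem proposition2p6p1:
  fixes G :: "('g, 'm) monoid_scheme"
    and L :: "('f, 'r, 'c) language"
    and C :: category
    and D :: "'i set" and leq :: "'i \<Rightarrow> 'i \<Rightarrow> bool"
    and M :: "'i \<Rightarrow> ('f, 'r, 'c, 'a) struct"
    and \<rho> :: "'i \<Rightarrow> 'i \<Rightarrow> 'a \<Rightarrow> 'a"
    and act :: "'i \<Rightarrow> 'g \<Rightarrow> 'a \<Rightarrow> 'a"
  assumes "group G"
    and "is_language L"
    and "directed_system L D leq M \<rho>"
    and "\<forall>i \<in> D. G_structure G L (M i) (act i)"
    and "\<forall>i \<in> D. \<forall>k \<in> D. leq k i \<longrightarrow> arrow C G L (M i) (act i) (M k) (act k) (\<rho> k i)"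
  shows "(\<forall>g \<in> carrier G. \<forall>i \<in> D. \<forall>x \<in> univ (M i).
            colim_act D leq M \<rho> act g (germ D leq M \<rho> i x) = germ D leq M \<rho> i (act i g x))
       \<and> G_structure G L (colim D leq M \<rho>) (colim_act D leq M \<rho> act)
       \<and> (\<forall>i \<in> D. morphism L (M i) (colim D leq M \<rho>) (germ D leq M \<rho> i)
                 \<and> equivariant G (univ (M i)) (act i) (colim_act D leq M \<rho> act) (germ D leq M \<rho> i))"
proof -
  interpret equivariant_directed_colimit L D leq M \<rho> G act
    using assms unfolding equivariant_directed_colimit_def equivariant_directed_colimit_axioms_def
      directed_colimit_def arrow_def
    by blast
  show ?thesis
    using act_colim_germ G_structure_colim morphism_germ by (auto simp: equivariant_def)
qed

end
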